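(* Let $S$ be a smooth projective surface over $\mathbb{C}$ with $b_1(S)=0$ and $p_g(S)>0$, let $H$ be a polarization and $c_1\in H^2(S,\mathbb{Z})$ algebraic, such that there are no rank 3 strictly Gieseker $H$-semistable sheaves on $S$ with first Chern class $c_1$. Write $\psi_{S,c_1}(x,y)=\sum_{n\ge 0}\psi_n(y)x^n$ and assume that for every $c_2$ one has $\overline{\chi}^{\mathrm{vir}}_{-y}(M_S^H(3,c_1,c_2))=\psi_{\mathrm{vd}}(y)$ with $\mathrm{vd}=6c_2-2c_1^2-8\chi$. Then, with $q=e^{2\pi i\tau}$, $y=e^{2\pi i z}$, \begin{align*} \frac{\mathsf{Z}^{\mathrm{inst}}_{S,H,3,c_1}(q,y)}{(y^{1/2}-y^{-1/2})^{\chi}}=\;&3\Big(\frac{1}{3\Phi(\tfrac{\tau}{3},z)}\Big)^{\chi}\Big(\frac{\Theta_{A_2^\vee,(0,1)}(q^{1/6},y)}{3\eta(q)^3}\Big)^{-K^2}\Sigma\big(q^{1/6}\big)\\ &+3\,\epsilon^{2c_1^2}\Big(\frac{1}{3\Phi(\tfrac{\tau+2}{3},z)}\Big)^{\chi}\Big(\frac{\Theta_{A_2^\vee,(0,1)}(\epsilon q^{1/6},y)}{3\eta(q)^3}\Big)^{-K^2}\Sigma\big(\epsilon q^{1/6}\big)\\ &+3(-1)^{\chi}\epsilon^{c_1^2}\Big(\frac{1}{3\Phi(\tfrac{\tau+1}{3},z)}\Big)^{\chi}\Big(\frac{\Theta_{A_2^\vee,(0,1)}(\epsilon^2 q^{1/6},y)}{3\eta(q)^3}\Big)^{-K^2}\Sigma\big(\epsilon^2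 q^{1/6}\big), \end{align*} where $\Sigma(x):=\sum_{a,b\in H^2(S,\mathbb{Z})}\mathrm{SW}(a)\mathrm{SW}(b)\,\epsilon^{(a-b)c_1}Z_+(x,y)^{ab}Z_-(x,y)^{(K-a)(K-b)}$.
   Context: $\chi=\chi(\mathcal{O}_S)$, $K=K_S$, $\epsilon=e^{2\pi i/3}$. $\mathrm{SW}(a)$ denotes the Seiberg–Witten invariant of $S$ in class $a$ in Mochizuki's convention ($\mathrm{SW}(a)=\widetilde{\mathrm{SW}}(2a-K)$ with $\widetilde{\mathrm{SW}}$ the usual invariant); only finitely many are nonzero. $M_S^H(3,c_1,c_2)$ is the moduli space of rank 3 $H$-stable torsion free sheaves with Chern classes $c_1,c_2$, carrying a perfect obstruction theory of virtual dimension $\mathrm{vd}=6c_2-2c_1^2-8\chi$; $\overline{\chi}^{\mathrm{vir}}_{-y}(M):=y^{-\mathrm{vd}/2}\chi^{\mathrm{vir}}_{-y}(M)$ is the normalized virtual $\chi_y$-genus of Fantechi–Göttsche. $\mathsf{Z}^{\mathrm{inst}}_{S,H,3,c_1}(q,y):=q^{-\chi/6+K^2/8}\sum_{c_2}\overline{\chi}^{\mathrm{vir}}_{-y}(M_S^H(3,c_1,c_2))\,q^{\mathrm{vd}/6}$. Theta functions: $\Theta_{A_2^\vee,(0,0)}(x,y)=\sum_{(m,n)\in\mathbb{Z}^2}x^{2(m^2+mn+n^2)}y^{m+n}$, $\Theta_{A_2^\vee,(0,1)}(x,y)=\sum_{(m,n)\in\mathbb{Z}^2}\epsilon^{m-n}x^{2(m^2+mn+n^2)}y^{m+n}$.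 $Z(x,y)=\Theta_{A_2^\vee,(0,0)}(x,y)/\Theta_{A_2^\vee,(0,1)}(x,y)$ and $Z_\pm(x,y)$ are the two roots in $\zeta$ of $\zeta^2-(Z(x,y)^2+3Z(x,y)Z(x,1))\zeta+Z(x,y)+3Z(x,1)=0$. Evaluation at $x=\epsilon^k q^{1/6}$ means $x^{2N}=\epsilon^{2kN}e^{2\pi i N\tau/3}$. $\overline{\eta}(x)=\prod_{n\ge1}(1-x^n)$, $\eta(q)=e^{\pi i\tau/12}\prod_{n\ge1}(1-q^n)$. $\psi_{S,c_1}(x,y):=9\Big(\frac{1}{3\prod_{n\ge1}(1-x^{2n})^{10}(1-x^{2n}y)(1-x^{2n}y^{-1})}\Big)^{\chi}\Big(\frac{\Theta_{A_2^\vee,(0,1)}(x,y)}{3\overline{\eta}(x^6)^3}\Big)^{-K^2}\Sigma(x)$. For $\tau'$ in the upper half plane and $z\in\mathbb{C}$, $\Phi(\tau',z):=(e^{\pi i z}-e^{-\pi i z})\,e^{\pi i\tau'}\prod_{n\ge1}(1-e^{2\pi i n\tau'})^{10}(1-e^{2\pi i n\tau'}e^{2\pi i z})(1-e^{2\pi i n\tau'}e^{-2\pi i z})$ (this is $\phi_{-2,1}^{1/2}\Delta^{1/2}$ at $q=e^{2\pi i\tau'}$). *)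

theory Defs
  imports "HOL-Analysis.Analysis"
begin

definition eps :: complex where "eps = exp (2 * pi * \<i> / 3)"

text \<open>Theta functions of the dual A2 lattice.\<close>
definition theta00 :: "complex \<Rightarrow> complex \<Rightarrow> complex" where
  "theta00 x y = infsum (\<lambda>(m::int, n::int). x ^ nat (2 * (m^2 + m*n + n^2)) * y powi (m + n)) UNIV"

definition theta01 :: "complex \<Rightarrow> complex \<Rightarrow> complex" where
  "theta01 x y = infsum (\<lambda>(m::int, n::int). eps powi (m - n) * x ^ nat (2 * (m^2 + m*n + n^2)) * y powi (m + n)) UNIV"

definition Zfun :: "complex \<Rightarrow> complex \<Rightarrow> complex" where
  "Zfun x y = theta00 x y / theta01 x y"

text \<open>The two roots of zeta^2 - (Z(x,y)^2 + 3 Z(x,y) Z(x,1)) zeta + Z(x,y) + 3 Z(x,1) = 0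
  (labelled via the principal square root; the expression Sigma below is symmetric under
  swapping them, given the Seiberg--Witten symmetry assumed in the theorem).\<close>
definition Zsum :: "complex \<Rightarrow> complex \<Rightarrow> complex" where
  "Zsum x y = (Zfun x y)^2 + 3 * Zfun x y * Zfun x 1"
definition Zprod :: "complex \<Rightarrow> complex \<Rightarrow> complex" where
  "Zprod x y = Zfun x y + 3 * Zfun x 1"
definition Zplus :: "complex \<Rightarrow> complex \<Rightarrow> complex" where
  "Zplus x y = (Zsum x y + csqrt ((Zsum x y)^2 - 4 * Zprod x y)) / 2"
definition Zminus :: "complex \<Rightarrow> complex \<Rightarrow> complex" where
  "Zminus x y = (Zsum x y - csqrt ((Zsum x y)^2 - 4 * Zprod x y)) / 2"

definition etabar :: "complex \<Rightarrow> complex" where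
  "etabar x = prodinf (\<lambda>n. 1 - x ^ Suc n)"

text \<open>Sigma(x) (depending also on y), for the abstract lattice H^2(S,Z) with
  intersection form ip, canonical class K, class c1 and SW invariants SW (finite support).\<close>
definition Sigma :: "('h::ab_group_add \<Rightarrow> 'h \<Rightarrow> int) \<Rightarrow> 'h \<Rightarrow> 'h \<Rightarrow> ('h \<Rightarrow> int)
    \<Rightarrow> complex \<Rightarrow> complex \<Rightarrow> complex" where
  "Sigma ip K c1 SW x y =
     (\<Sum>(a, b) \<in> {a. SW a \<noteq> 0} \<times> {b. SW b \<noteq> 0}.
        of_int (SW a * SW b) * eps powi (ip (a - b) c1)
        * Zplus x y powi (ip a b) * Zminus x y powi (ip (K - a) (K - b)))"

definition psi :: "('h::ab_group_add \<Rightarrow> 'h \<Rightarrow> int) \<Rightarrow> 'h \<Rightarrow> 'h \<Rightarrow> ('h \<Rightarrow> int) \<Rightarrow> int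
    \<Rightarrow> complex \<Rightarrow> complex \<Rightarrow> complex" where
  "psi ip K c1 SW chi x y =
     9 * (1 / (3 * prodinf (\<lambda>n. (1 - x ^ (2 * Suc n)) ^ 10 * (1 - x ^ (2 * Suc n) * y)
                                 * (1 - x ^ (2 * Suc n) / y)))) powi chi
       * (theta01 x y / (3 * etabar (x ^ 6) ^ 3)) powi (- ip K K)
       * Sigma ip K c1 SW x y"

definition psi_coeff :: "('h::ab_group_add \<Rightarrow> 'h \<Rightarrow> int) \<Rightarrow> 'h \<Rightarrow> 'h \<Rightarrow> ('h \<Rightarrow> int) \<Rightarrow> int
    \<Rightarrow> int \<Rightarrow> complex \<Rightarrow> complex" where
  "psi_coeff ip K c1 SW chi n y =
     (if n < 0 then 0
      else (deriv ^^ nat n) (\<lambda>x. psi ip K c1 SW chi x y) 0 / of_nat (fact (nat n)))"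

definition vdim :: "int \<Rightarrow> int \<Rightarrow> int \<Rightarrow> int" where
  "vdim c1sq chi c2 = 6 * c2 - 2 * c1sq - 8 * chi"

definition qpow :: "complex \<Rightarrow> real \<Rightarrow> complex" where
  "qpow \<tau> r = exp (2 * pi * \<i> * \<tau> * of_real r)"

text \<open>The instanton partition function, given the normalized virtual chi_y genera
  chivir c2 y of M_S^H(3,c1,c2), evaluated at q = exp(2 pi i tau), y = exp(2 pi i z).\<close>
definition Zinst_term :: "int \<Rightarrow> int \<Rightarrow> (int \<Rightarrow> complex \<Rightarrow> complex) \<Rightarrow> complex \<Rightarrow> complex
    \<Rightarrow> int \<Rightarrow> complex" where
  "Zinst_term c1sq chi chivir \<tau> z c2 =
     chivir c2 (exp (2 * pi * \<i> * z)) * qpow \<tau> (real_of_int (vdim c1sq chi c2) / 6)"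

definition Zinst :: "int \<Rightarrow> int \<Rightarrow> int \<Rightarrow> (int \<Rightarrow> complex \<Rightarrow> complex) \<Rightarrow> complex \<Rightarrow> complex
    \<Rightarrow> complex" where
  "Zinst K2 c1sq chi chivir \<tau> z =
     qpow \<tau> (- real_of_int chi / 6 + real_of_int K2 / 8)
     * infsum (Zinst_term c1sq chi chivir \<tau> z) UNIV"

text \<open>Phi(tau',z) = phi_{-2,1}^{1/2} Delta^{1/2}.\<close>
definition Phi :: "complex \<Rightarrow> complex \<Rightarrow> complex" where
  "Phi \<tau>' z = (exp (pi * \<i> * z) - exp (- pi * \<i> * z)) * exp (pi * \<i> * \<tau>')
     * prodinf (\<lambda>n. (1 - exp (2 * pi * \<i> * of_nat (Suc n) * \<tau>')) ^ 10
         * (1 - exp (2 * pi * \<i> * of_nat (Suc n) * \<tau>') * exp (2 * pi * \<i> * z))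
         * (1 - exp (2 * pi * \<i> * of_nat (Suc n) * \<tau>') * exp (- 2 * pi * \<i> * z)))"

definition eta :: "complex \<Rightarrow> complex" where
  "eta \<tau> = exp (pi * \<i> * \<tau> / 12) * prodinf (\<lambda>n. 1 - exp (2 * pi * \<i> * \<tau>) ^ Suc n)"

definition rhs_term :: "('h::ab_group_add \<Rightarrow> 'h \<Rightarrow> int) \<Rightarrow> 'h \<Rightarrow> 'h \<Rightarrow> ('h \<Rightarrow> int) \<Rightarrow> int
    \<Rightarrow> complex \<Rightarrow> nat \<Rightarrow> complex \<Rightarrow> complex \<Rightarrow> complex \<Rightarrow> complex" where
  "rhs_term ip K c1 SW chi cf k shift \<tau> z =
     (let x = eps ^ k * exp (2 * pi * \<i> * \<tau> / 6); y = exp (2 * pi * \<i> * z) in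
      3 * cf * (1 / (3 * Phi ((\<tau> + shift) / 3) z)) powi chi
        * (theta01 x y / (3 * eta \<tau> ^ 3)) powi (- ip K K)
        * Sigma ip K c1 SW x y)"

end

theory Submission
  imports Defs "HOL-Complex_Analysis.Complex_Analysis"
begin

(* The instanton series is, by hypothesis, a lacunary part of the Taylor series of psi(x, y)
   at x = q^(1/6): only the exponents vd = 6 c2 - 2 c1^2 - 8 chi occur, i.e. a single residue
   class mod 6.  psi is analytic at x = 0, since the A2 theta series and the eta-type products
   are, theta01(0, y) = 1, and the Seiberg-Witten symmetry makes Sigma a function of Z+ + Z-
   and Z+ Z- alone.  As psi is even in x, that residue class mod 6 is a residue class mod 3,
   extracted by averaging psi(eps^k x, y), k = 0, 1, 2, against cube roots of unity.  Finally
   x^(2n) = exp(2 pi i n (tau + s)/3) for x = eps^k q^(1/6) and 2k = s (mod 3), which rewrites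
   each averaged term through Phi((tau + s)/3, z) and eta(tau). *)

section \<open>Holomorphy of infinite sums and products\<close>

lemma holomorphic_on_infsum:
  fixes g :: "'i \<Rightarrow> complex \<Rightarrow> complex" and M :: "'i \<Rightarrow> real"
  assumes holo: "\<And>i. g i holomorphic_on cball c r"
    and bound: "\<And>i x. x \<in> cball c r \<Longrightarrow> norm (g i x) \<le> M i"
    and summable: "M summable_on UNIV"
  shows "(\<lambda>x. \<Sum>\<^sub>\<infinity>i. g i x) holomorphic_on ball c r"
proof -
  have "uniform_limit (cball c r) (\<lambda>I x. \<Sum>i\<in>I. g i x) (\<lambda>x. \<Sum>\<^sub>\<infinity>i. g i x)
          (finite_subsets_at_top UNIV)"
    by (rule Weierstrass_m_test_general) (use bound summable in auto)
  then show ?thesis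
    by (rule holomorphic_uniform_limit[rotated])
       (auto intro!: always_eventually holomorphic_intros holomorphic_on_imp_continuous_on
         holomorphic_on_subset[OF holo])
qed

lemma holomorphic_on_prodinf:
  fixes u :: "nat \<Rightarrow> complex \<Rightarrow> complex" and M :: "nat \<Rightarrow> real"
  assumes holo: "\<And>n. u n holomorphic_on cball c r"
    and bound: "\<And>n x. x \<in> cball c r \<Longrightarrow> norm (u n x - 1) \<le> M n"
    and summable: "summable M"
  shows "(\<lambda>x. \<Prod>n. u n x) holomorphic_on ball c r"
proof -
  let ?P = "\<lambda>N x. \<Prod>n<N. u n x"
  have "uniformly_convergent_on (cball c r) ?P"
  proof (rule uniformly_convergent_on_prod')
    show "continuous_on (cball c r) (u n)" for n
      using holo holomorphic_on_imp_continuous_on by blast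
    show "uniformly_convergent_on (cball c r) (\<lambda>N x. \<Sum>n<N. norm (u n x - 1))"
      by (rule Weierstrass_m_test'_ev[OF _ summable]) (use bound in auto)
  qed simp
  moreover have "lim (\<lambda>N. ?P N x) = (\<Prod>n. u n x)" if "x \<in> cball c r" for x
  proof -
    have "summable (\<lambda>n. norm (u n x - 1))"
      by (rule summable_comparison_test'[OF summable]) (use bound that in auto)
    then have "convergent_prod (\<lambda>n. u n x)"
      by (intro abs_convergent_prod_imp_convergent_prod summable_imp_abs_convergent_prod)
    then show ?thesis
      by (intro limI has_prod_imp_tendsto' convergent_prod_has_prod)
  qed
  ultimately have "uniform_limit (cball c r) ?P (\<lambda>x. \<Prod>n. u n x) sequentially"
    using uniform_limit_cong'[of "cball c r" ?P ?P "\<lambda>x. lim (\<lambda>N. ?P N x)" "\<lambda>x. \<Prod>n. u n x"]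
    by (simp add: uniformly_convergent_uniform_limit_iff)
  then show ?thesis
    by (rule holomorphic_uniform_limit[rotated])
       (auto intro!: always_eventually holomorphic_intros holomorphic_on_imp_continuous_on
         holomorphic_on_subset[OF holo])
qed

lemma holomorphic_lipschitz_at_0:
  fixes g :: "complex \<Rightarrow> complex"
  assumes "g holomorphic_on UNIV"
  obtains C where "\<And>w. norm w \<le> 1 \<Longrightarrow> norm (g w - g 0) \<le> C * norm w"
proof -
  have "deriv g holomorphic_on UNIV"
    using holomorphic_deriv[OF assms] by simp
  then have "compact (deriv g ` cball 0 1)"
    by (intro compact_continuous_image holomorphic_on_imp_continuous_on)
       (auto intro: holomorphic_on_subset)
  then obtain C where C: "\<And>w. w \<in> cball 0 1 \<Longrightarrow> norm (deriv g w) \<le> C"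
    by (meson compact_imp_bounded bounded_iff image_eqI)
  have "norm (g w - g 0) \<le> C * norm (w - 0)" if "norm w \<le> 1" for w
    by (rule field_differentiable_bound[of "cball 0 1"])
       (use C that in \<open>auto intro: holomorphic_derivI[OF assms]\<close>)
  then show ?thesis
    by (intro that) simp
qed

lemma analytic_at_0_prodinf_powers:
  fixes g :: "complex \<Rightarrow> complex"
  assumes holo: "g holomorphic_on UNIV" and g0: "g 0 = 1" and k: "k > 0"
  shows "(\<lambda>x. \<Prod>n. g (x ^ (k * Suc n))) analytic_on {0}"
proof -
  obtain C where C: "\<And>w. norm w \<le> 1 \<Longrightarrow> norm (g w - 1) \<le> C * norm w"
    using holomorphic_lipschitz_at_0[OF holo] g0 by metis
  have "0 \<le> C" using order_trans[OF norm_ge_zero C[of 1]] by simp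
  have bound: "norm (g (x ^ (k * Suc n)) - 1) \<le> C * (1/2) ^ Suc n"
    if "x \<in> cball 0 (1/2)" for n x
  proof -
    have "norm (x ^ (k * Suc n)) \<le> (1/2) ^ (k * Suc n)"
      using that by (auto simp: norm_power intro: power_mono)
    also have "\<dots> \<le> (1/2) ^ Suc n"
      using k mult_le_mono1[of 1 k "Suc n"] by (intro power_decreasing) auto
    finally have "norm (x ^ (k * Suc n)) \<le> (1/2) ^ Suc n" .
    moreover have "(1/2::real) ^ Suc n \<le> 1" by (rule power_le_one) auto
    ultimately show ?thesis
      using C \<open>0 \<le> C\<close> by (meson mult_left_mono order_trans)
  qed
  have summable: "summable (\<lambda>n. C * (1/2::real) ^ Suc n)"
    by (intro summable_mult summable_geometric_iff[THEN iffD2]) simp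
  have "(\<lambda>x. \<Prod>n. g (x ^ (k * Suc n))) holomorphic_on ball 0 (1/2)"
    by (rule holomorphic_on_prodinf[OF _ bound summable])
       (intro holomorphic_on_compose_gen[OF _ holo, unfolded o_def] holomorphic_intros; simp)
  then show ?thesis
    unfolding analytic_at_ball by (intro exI[of _ "1/2"]) simp
qed

section \<open>Cube roots of unity and root-of-unity filters\<close>

lemma norm_eps: "norm eps = 1"
  by (simp add: eps_def norm_exp_eq_Re)

lemma eps_nonzero: "eps \<noteq> 0"
  using norm_eps by auto

lemma eps_power_int_eq_1: "eps powi m = 1 \<longleftrightarrow> 3 dvd m"
proof -
  have "eps powi m = exp (of_int m * (2 * pi * \<i> / 3))"
    by (simp add: eps_def exp_power_int)
  also have "\<dots> = 1 \<longleftrightarrow> (\<exists>n::int. real_of_int m * (2 * pi / 3) = 2 * pi * n)"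
    by (simp add: exp_eq_1)
  also have "\<dots> \<longleftrightarrow> (\<exists>n::int. m = 3 * n)"
    by (intro ex_cong1) (simp add: field_simps; metis of_int_eq_iff of_int_mult of_int_numeral)
  finally show ?thesis
    by (simp add: dvd_def)
qed

lemma eps_cube: "eps ^ 3 = 1"
  using eps_power_int_eq_1[of 3] by simp

lemma eps_power_int_cong:
  assumes "3 dvd m - n"
  shows "eps powi m = eps powi n"
proof -
  have "eps powi m = eps powi (m - n) * eps powi n"
    using eps_nonzero by (simp flip: power_int_add)
  with assms show ?thesis
    by (simp add: eps_power_int_eq_1)
qed

lemma sum_root_of_unity_powers:
  fixes \<zeta> :: complex
  assumes \<zeta>: "\<And>m::int. \<zeta> powi m = 1 \<longleftrightarrow> int N dvd m"
  shows "(\<Sum>j<N. (\<zeta> powi m) ^ j) = (if int N dvd m then of_nat N else 0)"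
proof (cases "int N dvd m")
  case False
  then have "\<zeta> powi m \<noteq> 1"
    using \<zeta> by blast
  moreover have "(\<zeta> powi m) ^ N = 1"
    using \<zeta>[of "m * int N"] by (simp flip: power_int_mult power_int_of_nat)
  ultimately show ?thesis
    using False by (simp add: geometric_sum)
next
  case True
  then have "\<zeta> powi m = 1"
    using \<zeta> by blast
  with True show ?thesis
    by simp
qed

lemma sums_root_of_unity_filter:
  fixes \<zeta> x :: complex and a :: "nat \<Rightarrow> complex" and C :: int
  assumes \<zeta>: "\<And>m::int. \<zeta> powi m = 1 \<longleftrightarrow> int N dvd m" and N: "N > 0"
    and sums: "\<And>j. j < N \<Longrightarrow> (\<lambda>n. a n * (\<zeta> ^ j * x) ^ n) sums f (\<zeta> ^ j * x)"
  shows "(\<lambda>n. if int N dvd int n - C then a n * x ^ n else 0)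
           sums ((\<Sum>j<N. \<zeta> powi (- (int j * C)) * f (\<zeta> ^ j * x)) / of_nat N)"
proof -
  have "\<zeta> \<noteq> 0"
    using \<zeta>[of "int N"] N by (auto simp: zero_power)
  have "(\<Sum>j<N. \<zeta> powi (- (int j * C)) * (a n * (\<zeta> ^ j * x) ^ n))
          = a n * x ^ n * (\<Sum>j<N. (\<zeta> powi (int n - C)) ^ j)" for n
    unfolding sum_distrib_left
  proof (intro sum.cong refl)
    fix j
    have "\<zeta> powi (- (int j * C)) * (\<zeta> ^ j) ^ n = \<zeta> powi (- (int j * C)) * \<zeta> powi (int j * int n)"
      by (metis of_nat_mult power_int_of_nat power_mult)
    also have "\<dots> = \<zeta> powi ((int n - C) * int j)"
      using \<open>\<zeta> \<noteq> 0\<close> by (simp add: algebra_simps flip: power_int_add)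
    also have "\<dots> = (\<zeta> powi (int n - C)) ^ j"
      by (simp add: power_int_mult)
    finally have "\<zeta> powi (- (int j * C)) * (\<zeta> ^ j) ^ n = (\<zeta> powi (int n - C)) ^ j" .
    then show "\<zeta> powi (- (int j * C)) * (a n * (\<zeta> ^ j * x) ^ n) = a n * x ^ n * (\<zeta> powi (int n - C)) ^ j"
      by (simp add: power_mult_distrib algebra_simps)
  qed
  then have termwise: "(\<Sum>j<N. \<zeta> powi (- (int j * C)) * (a n * (\<zeta> ^ j * x) ^ n))
          = of_nat N * (if int N dvd int n - C then a n * x ^ n else 0)" for n
    by (simp add: sum_root_of_unity_powers[OF \<zeta>])
  have "(\<lambda>n. \<Sum>j<N. \<zeta> powi (- (int j * C)) * (a n * (\<zeta> ^ j * x) ^ n))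
          sums (\<Sum>j<N. \<zeta> powi (- (int j * C)) * f (\<zeta> ^ j * x))"
    by (intro sums_sum sums_mult sums) simp
  then have "(\<lambda>n. of_nat N * (if int N dvd int n - C then a n * x ^ n else 0))
               sums (\<Sum>j<N. \<zeta> powi (- (int j * C)) * f (\<zeta> ^ j * x))"
    unfolding termwise .
  from sums_divide[OF this, of "of_nat N"] N show ?thesis
    by simp
qed

section \<open>Filtering a Taylor series\<close>

lemma higher_deriv_odd_even_function:
  fixes f :: "complex \<Rightarrow> complex"
  assumes f: "f analytic_on {0}" and even: "\<And>w. f (- w) = f w" and n: "odd n"
  shows "(deriv ^^ n) f 0 = 0"
proof -
  obtain r where "r > 0" and holo: "f holomorphic_on ball 0 r"
    using f analytic_at_ball by blast
  have "(deriv ^^ n) (\<lambda>w. f (- 1 * w)) 0 = (- 1) ^ n * (deriv ^^ n) f (- 1 * 0)"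
    by (rule higher_deriv_compose_linear[where S = "ball 0 r", OF holo]) (use \<open>r > 0\<close> in auto)
  then have "(deriv ^^ n) f 0 = - (deriv ^^ n) f 0"
    using even n by simp
  then show ?thesis
    by simp
qed

lemma summable_norm_taylor_series:
  fixes f :: "complex \<Rightarrow> complex"
  assumes holo: "f holomorphic_on ball 0 R" and w: "norm w < R"
  shows "summable (\<lambda>n. norm ((deriv ^^ n) f 0 / fact n * w ^ n))"
proof -
  define \<rho> where "\<rho> = (norm w + R) / 2"
  have "norm w < \<rho>" "\<rho> < R"
    using w by (simp_all add: \<rho>_def)
  then have "complex_of_real \<rho> \<in> ball 0 R"
    by (simp add: abs_of_pos le_less_trans[OF norm_ge_zero])
  then have "(\<lambda>n. (deriv ^^ n) f 0 / fact n * (complex_of_real \<rho> - 0) ^ n) sums f \<rho>"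
    by (rule holomorphic_power_series[OF holo])
  then have "summable (\<lambda>n. (deriv ^^ n) f 0 / fact n * complex_of_real \<rho> ^ n)"
    unfolding diff_zero by (rule sums_summable)
  then show ?thesis
    by (rule powser_insidea) (use \<open>norm w < \<rho>\<close> in \<open>simp add: abs_of_pos le_less_trans[OF norm_ge_zero]\<close>)
qed

lemma has_sum_arith_progression:
  fixes g :: "nat \<Rightarrow> 'a::{comm_monoid_add, topological_space}" and d C :: int
  assumes d: "d > 0" and g: "(g has_sum S) {n. d dvd int n - C}"
  shows "((\<lambda>k. if 0 \<le> d * k + C then g (nat (d * k + C)) else 0) has_sum S) UNIV"
proof -
  define A where "A = {k. 0 \<le> d * k + C}"
  define \<phi> where "\<phi> = (\<lambda>k. nat (d * k + C))"
  have inj: "inj_on \<phi> A"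
    using d by (auto simp: inj_on_def A_def \<phi>_def eq_nat_nat_iff)
  moreover have "\<phi> ` A = {n. d dvd int n - C}"
  proof safe
    fix n assume "d dvd int n - C"
    then obtain k where "int n - C = d * k"
      by blast
    then show "n \<in> \<phi> ` A"
      by (auto simp: A_def \<phi>_def image_iff intro!: exI[of _ k])
  qed (auto simp: A_def \<phi>_def)
  ultimately have "((g \<circ> \<phi>) has_sum S) A"
    using has_sum_reindex[OF inj, of g S] g by simp
  then show ?thesis
    by (rule has_sum_cong_neutral[THEN iffD1, rotated -1]) (auto simp: A_def \<phi>_def)
qed

(* The odd coefficients vanish and C is even, so the class of n mod 6 is fixed by its class
   mod 3 and the cube-root filter suffices. *)
lemma has_sum_even_taylor_series_mod_6:
  fixes f :: "complex \<Rightarrow> complex" and C :: int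
  assumes holo: "f holomorphic_on ball 0 R" and even: "\<And>w. f (- w) = f w"
    and x: "norm x < R" and C: "even C"
  shows "((\<lambda>n. (deriv ^^ n) f 0 / fact n * x ^ n)
           has_sum (\<Sum>k<3. eps powi (- (int k * C)) * f (eps ^ k * x)) / 3) {n. 6 dvd int n - C}"
proof -
  define a where "a n = (deriv ^^ n) f 0 / fact n" for n
  have "f analytic_on {0}"
    using holo le_less_trans[OF norm_ge_zero x] unfolding analytic_at_ball by blast
  then have odd: "a n = 0" if "odd n" for n
    using higher_deriv_odd_even_function even that by (simp add: a_def)
  have "(\<lambda>n. a n * (eps ^ k * x) ^ n) sums f (eps ^ k * x)" for k
    using holomorphic_power_series[OF holo, of "eps ^ k * x"] x
    by (simp add: a_def norm_mult norm_power norm_eps)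
  then have "(\<lambda>n. if int 3 dvd int n - C then a n * x ^ n else 0)
               sums ((\<Sum>k<3. eps powi (- (int k * C)) * f (eps ^ k * x)) / of_nat 3)"
    by (intro sums_root_of_unity_filter) (simp_all add: eps_power_int_eq_1)
  moreover have "summable (\<lambda>n. norm (if int 3 dvd int n - C then a n * x ^ n else 0))"
    by (rule summable_comparison_test'[OF summable_norm_taylor_series[OF holo x]])
       (simp add: a_def)
  ultimately have "((\<lambda>n. if 3 dvd int n - C then a n * x ^ n else 0)
                      has_sum (\<Sum>k<3. eps powi (- (int k * C)) * f (eps ^ k * x)) / 3) UNIV"
    by (simp add: norm_summable_imp_has_sum)
  moreover have "6 dvd int n - C \<longleftrightarrow> 3 dvd int n - C \<and> even n" for n
    using C by presburger
  ultimately show ?thesis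
    unfolding a_def[symmetric]
    by (subst has_sum_cong_neutral[where T = UNIV and g = "\<lambda>n. if 3 dvd int n - C then a n * x ^ n else 0"])
       (auto simp: odd)
qed

section \<open>The theta series of the dual A2 lattice\<close>

lemma summable_on_int_half_power: "(\<lambda>m::int. (1/2::real) ^ nat \<bar>m\<bar>) summable_on UNIV"
proof -
  have geom: "(\<lambda>n::nat. (1/2::real) ^ n) summable_on UNIV"
    by (subst summable_on_UNIV_nonneg_real_iff) (auto intro: summable_geometric)
  have "(\<lambda>m::int. (1/2::real) ^ nat \<bar>m\<bar>) summable_on range int"
    by (subst summable_on_reindex) (auto simp: o_def geom)
  moreover have "(\<lambda>m::int. (1/2::real) ^ nat \<bar>m\<bar>) summable_on range (\<lambda>n. - int n)"
    by (subst summable_on_reindex) (auto simp: o_def geom inj_on_def)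
  moreover have "x \<in> range int \<union> range (\<lambda>n. - int n)" for x :: int
    by (cases "x \<ge> 0") (auto simp: image_iff intro: exI[of _ "nat x"] exI[of _ "nat (- x)"])
  ultimately show ?thesis
    using summable_on_union by (metis UNIV_eq_I)
qed

lemma summable_on_int_pair_half_power:
  "(\<lambda>(m::int, n::int). (1/2::real) ^ nat \<bar>m\<bar> * (1/2) ^ nat \<bar>n\<bar>) summable_on UNIV"
proof -
  define b where "b = (\<lambda>m::int. (1/2::real) ^ nat \<bar>m\<bar>)"
  have b: "b summable_on UNIV"
    unfolding b_def by (rule summable_on_int_half_power)
  have "(\<lambda>p. b (fst p) * b (snd p)) summable_on UNIV \<times> UNIV"
  proof (rule summable_on_SigmaI[where g = "\<lambda>m. b m * infsum b UNIV"])
    show "((\<lambda>n. b (fst (m, n)) * b (snd (m, n))) has_sum b m * infsum b UNIV) UNIV" for m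
      using has_sum_cmult_right[OF has_sum_infsum[OF b], of "b m"] by simp
    show "(\<lambda>m. b m * infsum b UNIV) summable_on UNIV"
      using b by (rule summable_on_cmult_left)
  qed (simp add: b_def)
  then show ?thesis
    by (simp add: b_def case_prod_beta')
qed

lemma abs_le_A2_norm: "nat \<bar>m\<bar> + nat \<bar>n\<bar> \<le> nat (2 * (m^2 + m*n + n^2))" for m n :: int
proof -
  have "\<bar>k\<bar> \<le> k^2" for k :: int
  proof (cases "k = 0")
    case False
    then have "\<bar>k\<bar> * 1 \<le> \<bar>k\<bar> * \<bar>k\<bar>"
      by (intro mult_left_mono) auto
    then show ?thesis
      by (simp add: power2_eq_square abs_mult_self_eq)
  qed simp
  moreover have "2 * (m^2 + m*n + n^2) = m^2 + n^2 + (m+n)^2"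
    by (simp add: power2_eq_square algebra_simps)
  moreover have "(m+n)^2 \<ge> 0"
    by simp
  ultimately have "\<bar>m\<bar> + \<bar>n\<bar> \<le> 2 * (m^2 + m*n + n^2)"
    by (metis add_mono le_add_same_cancel1 order_trans)
  then show ?thesis
    by linarith
qed

lemma norm_power_int_le:
  fixes y :: complex
  assumes "y \<noteq> 0"
  shows "norm (y powi k) \<le> max (norm y) (1 / norm y) ^ nat \<bar>k\<bar>"
proof (cases "k \<ge> 0")
  case True
  then have "norm (y powi k) = norm y ^ nat k"
    by (simp add: power_int_def norm_power)
  with True show ?thesis
    by (simp add: power_mono)
next
  case False
  then have "norm (y powi k) = (1 / norm y) ^ nat (-k)"
    by (simp add: power_int_def norm_power norm_inverse norm_divide power_inverse inverse_eq_divide)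
  with False show ?thesis
    by (simp add: power_mono)
qed

lemma analytic_at_0_A2_theta_series:
  fixes y :: complex and c :: "int \<times> int \<Rightarrow> complex"
  assumes y: "y \<noteq> 0" and c: "\<And>p. norm (c p) \<le> 1"
  shows "(\<lambda>x. \<Sum>\<^sub>\<infinity>(m,n). c (m,n) * x ^ nat (2 * (m^2 + m*n + n^2)) * y powi (m + n))
           analytic_on {0}"
proof -
  define A where "A = max (norm y) (1 / norm y)"
  have A: "A \<ge> 1"
    using y by (cases "norm y \<ge> 1") (auto simp: A_def le_max_iff_disj field_simps)
  define r where "r = 1 / (2 * A)"
  have r: "r > 0" "r \<le> 1" "r * A = 1/2"
    using A by (auto simp: r_def field_simps)
  define g where "g = (\<lambda>(m::int, n::int) x. c (m,n) * x ^ nat (2 * (m^2 + m*n + n^2)) * y powi (m + n))"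
  have bound: "norm (g (m,n) x) \<le> (1/2) ^ nat \<bar>m\<bar> * (1/2) ^ nat \<bar>n\<bar>"
    if x: "x \<in> cball 0 r" for m n x
  proof -
    define l where "l = nat \<bar>m\<bar> + nat \<bar>n\<bar>"
    have "norm (g (m,n) x) \<le> 1 * r ^ nat (2 * (m^2 + m*n + n^2)) * A ^ nat \<bar>m + n\<bar>"
      unfolding g_def prod.case A_def norm_mult norm_power using c[of "(m,n)"] x norm_power_int_le[OF y] r(1)
      by (intro mult_mono power_mono) auto
    also have "\<dots> \<le> r ^ l * A ^ l"
    proof (intro mult_mono)
      show "1 * r ^ nat (2 * (m^2 + m*n + n^2)) \<le> r ^ l"
        using r abs_le_A2_norm[of m n] unfolding l_def by (simp add: power_decreasing)
      have "nat \<bar>m + n\<bar> \<le> l"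
        unfolding l_def by (simp add: nat_mono abs_triangle_ineq flip: nat_add_distrib)
      then show "A ^ nat \<bar>m + n\<bar> \<le> A ^ l"
        using A by (rule power_increasing)
    qed (use r A in auto)
    also have "\<dots> = (1/2) ^ nat \<bar>m\<bar> * (1/2) ^ nat \<bar>n\<bar>"
      by (simp add: l_def power_add power_mult_distrib flip: r(3))
    finally show ?thesis .
  qed
  have "(\<lambda>x. \<Sum>\<^sub>\<infinity>p. g p x) holomorphic_on ball 0 r"
    by (rule holomorphic_on_infsum[OF _ _ summable_on_int_pair_half_power])
       (use bound in \<open>auto simp: g_def intro!: holomorphic_intros\<close>)
  then show ?thesis
    unfolding analytic_at_ball g_def case_prod_beta' using r(1) by blast
qed

lemma analytic_at_0_theta00: "y \<noteq> 0 \<Longrightarrow> (\<lambda>x. theta00 x y) analytic_on {0}"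
  using analytic_at_0_A2_theta_series[of y "\<lambda>_. 1"] by (simp add: theta00_def)

lemma analytic_at_0_theta01: "y \<noteq> 0 \<Longrightarrow> (\<lambda>x. theta01 x y) analytic_on {0}"
  using analytic_at_0_A2_theta_series[of y "\<lambda>(m,n). eps powi (m - n)"]
  by (simp add: theta01_def case_prod_beta' norm_power_int norm_eps)

lemma A2_theta_series_at_0:
  "(\<Sum>\<^sub>\<infinity>(m,n). c (m,n) * (0::complex) ^ nat (2 * (m^2 + m*n + n^2)) * y powi (m + n)) = c (0,0)"
proof -
  define f where "f = (\<lambda>(m::int, n::int). c (m,n) * (0::complex) ^ nat (2 * (m^2 + m*n + n^2)) * y powi (m + n))"
  have "f p = 0" if "p \<noteq> (0, 0)" for p
  proof -
    obtain m n where p: "p = (m, n)"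
      by fastforce
    then have "nat (2 * (m^2 + m*n + n^2)) \<noteq> 0"
      using abs_le_A2_norm[of m n] that by auto
    then show ?thesis
      by (simp add: f_def p)
  qed
  then have "(\<Sum>\<^sub>\<infinity>p. f p) = (\<Sum>\<^sub>\<infinity>p\<in>{(0,0)}. f p)"
    by (intro infsum_cong_neutral) auto
  then show ?thesis
    by (simp add: f_def)
qed

lemma theta00_at_0: "theta00 0 y = 1"
  using A2_theta_series_at_0[of "\<lambda>_. 1"] by (simp add: theta00_def)

lemma theta01_at_0: "theta01 0 y = 1"
  using A2_theta_series_at_0[of "\<lambda>(m,n). eps powi (m - n)"] by (simp add: theta01_def case_prod_beta')

lemma even_nat_power_minus: "(- x) ^ nat (2 * k) = (x::complex) ^ nat (2 * k)"
  by (simp add: nat_mult_distrib power_mult)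

lemma theta00_minus: "theta00 (- x) y = theta00 x y"
  unfolding theta00_def even_nat_power_minus ..

lemma theta01_minus: "theta01 (- x) y = theta01 x y"
  unfolding theta01_def even_nat_power_minus ..

section \<open>Analyticity of psi at the origin\<close>

fun sym_power_sum :: "complex \<Rightarrow> complex \<Rightarrow> nat \<Rightarrow> complex" where
  "sym_power_sum s p 0 = 2"
| "sym_power_sum s p (Suc 0) = s"
| "sym_power_sum s p (Suc (Suc d)) = s * sym_power_sum s p (Suc d) - p * sym_power_sum s p d"

lemma sym_power_sum_eq: "sym_power_sum (u + v) (u * v) d = u ^ d + v ^ d"
  by (induction "u + v" "u * v" d rule: sym_power_sum.induct) (simp_all add: algebra_simps)

lemma analytic_on_sym_power_sum [analytic_intros]:
  assumes "f analytic_on A" "g analytic_on A"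
  shows "(\<lambda>x. sym_power_sum (f x) (g x) d) analytic_on A"
proof (induction d rule: less_induct)
  case (less d)
  consider "d = 0" | "d = Suc 0" | d' where "d = Suc (Suc d')"
    by (metis not0_implies_Suc)
  then show ?case
    by cases (use assms in \<open>auto intro!: analytic_intros less.IH\<close>)
qed

lemma power_int_symmetrize:
  fixes u v :: complex and p q :: int
  assumes "u \<noteq> 0" "v \<noteq> 0"
  shows "u powi p * v powi q + u powi q * v powi p
           = (u * v) powi (min p q) * sym_power_sum (u + v) (u * v) (nat \<bar>p - q\<bar>)"
proof -
  have shift: "u powi a * v powi (a + int d) + u powi (a + int d) * v powi a
                 = (u * v) powi a * sym_power_sum (u + v) (u * v) d" for a :: int and d :: nat
    using assms by (simp add: sym_power_sum_eq power_int_add power_int_mult_distrib algebra_simps)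
  show ?thesis
  proof (cases "p \<le> q")
    case True
    then show ?thesis
      using shift[of p "nat (q - p)"] by (simp add: min_def)
  next
    case False
    then show ?thesis
      using shift[of q "nat (p - q)"] by (simp add: min_def add.commute)
  qed
qed

lemma sum_pairs_symmetrize:
  fixes ip :: "'h::ab_group_add \<Rightarrow> 'h \<Rightarrow> int" and u v :: complex
  assumes ip_sym: "\<And>a b. ip a b = ip b a"
    and S: "\<And>a b. (a, b) \<in> S \<Longrightarrow> (K - b, K - a) \<in> S"
    and w: "\<And>a b. w (K - b) (K - a) = w a b"
    and uv: "u \<noteq> 0" "v \<noteq> 0"
  shows "(\<Sum>(a, b) \<in> S. w a b * u powi (ip a b) * v powi (ip (K - a) (K - b)))
       = (\<Sum>(a, b) \<in> S. w a b * ((u * v) powi (min (ip a b) (ip (K - a) (K - b)))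
            * sym_power_sum (u + v) (u * v) (nat \<bar>ip a b - ip (K - a) (K - b)\<bar>))) / 2"
proof -
  define F where "F = (\<lambda>(a, b). w a b * u powi (ip a b) * v powi (ip (K - a) (K - b)))"
  define G where "G = (\<lambda>(a, b). w a b * u powi (ip (K - a) (K - b)) * v powi (ip a b))"
  define \<sigma> where "\<sigma> = (\<lambda>(a::'h, b::'h). (K - b, K - a))"
  have "sum F S = sum (F \<circ> \<sigma>) S"
    by (rule sum.reindex_bij_witness[of _ \<sigma> \<sigma>]) (use S in \<open>auto simp: \<sigma>_def\<close>)
  also have "F \<circ> \<sigma> = G"
  proof
    fix p :: "'h \<times> 'h"
    obtain a b where p: "p = (a, b)"
      by fastforce
    show "(F \<circ> \<sigma>) p = G p"
      using ip_sym[of "K - b" "K - a"] ip_sym[of b a] by (simp add: p F_def G_def \<sigma>_def w)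
  qed
  finally have "2 * sum F S = sum (\<lambda>p. F p + G p) S"
    by (simp add: sum.distrib)
  also have "\<dots> = (\<Sum>(a, b) \<in> S. w a b * ((u * v) powi (min (ip a b) (ip (K - a) (K - b)))
            * sym_power_sum (u + v) (u * v) (nat \<bar>ip a b - ip (K - a) (K - b)\<bar>)))"
    using power_int_symmetrize[OF uv]
    by (intro sum.cong) (auto simp: F_def G_def mult.assoc simp flip: distrib_left)
  finally show ?thesis
    by (simp add: F_def field_simps)
qed

lemma Zplus_add_Zminus: "Zplus x y + Zminus x y = Zsum x y"
  by (simp add: Zplus_def Zminus_def field_simps)

lemma Zplus_mult_Zminus: "Zplus x y * Zminus x y = Zprod x y"
proof -
  have "Zplus x y * Zminus x y = ((Zsum x y)^2 - (csqrt ((Zsum x y)^2 - 4 * Zprod x y))^2) / 4"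
    by (simp add: Zplus_def Zminus_def power2_eq_square field_simps)
  then show ?thesis
    by (simp add: power2_csqrt)
qed

lemma analytic_at_0_Zfun: "y \<noteq> 0 \<Longrightarrow> (\<lambda>x. Zfun x y) analytic_on {0}"
  unfolding Zfun_def
  by (intro analytic_intros analytic_at_0_theta00 analytic_at_0_theta01) (auto simp: theta01_at_0)

lemma Zprod_at_0: "Zprod 0 y = 4"
  by (simp add: Zprod_def Zfun_def theta00_at_0 theta01_at_0)

(* The roots Z+ and Z- are labelled through a branch of csqrt and need not be analytic; thanks
   to the symmetry SW(K - a) = +-SW(a), Sigma only depends on Z+ + Z- and Z+ Z-, which are. *)
definition Sigma_sym :: "('h::ab_group_add \<Rightarrow> 'h \<Rightarrow> int) \<Rightarrow> 'h \<Rightarrow> 'h \<Rightarrow> ('h \<Rightarrow> int)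
    \<Rightarrow> complex \<Rightarrow> complex \<Rightarrow> complex" where
  "Sigma_sym ip K c1 SW s p =
     (\<Sum>(a, b) \<in> {a. SW a \<noteq> 0} \<times> {b. SW b \<noteq> 0}.
        of_int (SW a * SW b) * eps powi (ip (a - b) c1)
        * (p powi (min (ip a b) (ip (K - a) (K - b)))
           * sym_power_sum s p (nat \<bar>ip a b - ip (K - a) (K - b)\<bar>))) / 2"

lemma Sigma_eq_Sigma_sym:
  fixes ip :: "'h::ab_group_add \<Rightarrow> 'h \<Rightarrow> int"
  assumes ip_sym: "\<And>a b. ip a b = ip b a"
    and SW_sym: "\<And>a. SW (K - a) = (-1) ^ N * SW a"
    and nonzero: "Zprod x y \<noteq> 0"
  shows "Sigma ip K c1 SW x y = Sigma_sym ip K c1 SW (Zsum x y) (Zprod x y)"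
proof -
  have "Zplus x y \<noteq> 0" "Zminus x y \<noteq> 0"
    using nonzero by (auto simp flip: Zplus_mult_Zminus)
  moreover have "(K - b, K - a) \<in> {a. SW a \<noteq> 0} \<times> {b. SW b \<noteq> 0}"
    if "(a, b) \<in> {a. SW a \<noteq> 0} \<times> {b. SW b \<noteq> 0}" for a b
    using that SW_sym[of a] SW_sym[of b] by auto
  moreover have "of_int (SW (K - b) * SW (K - a)) * eps powi (ip ((K - b) - (K - a)) c1)
      = of_int (SW a * SW b) * eps powi (ip (a - b) c1)" for a b
  proof -
    have "((-1::int) ^ N) * (-1) ^ N = 1"
      by (simp flip: power_mult_distrib)
    then have "SW (K - b) * SW (K - a) = SW a * SW b"
      unfolding SW_sym by (simp add: algebra_simps)
    moreover have "(K - b) - (K - a) = a - b"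
      by (simp add: algebra_simps)
    ultimately show ?thesis
      by simp
  qed
  ultimately show ?thesis
    unfolding Sigma_def Sigma_sym_def
    by (subst sum_pairs_symmetrize[OF ip_sym]) (simp_all add: Zplus_add_Zminus Zplus_mult_Zminus)
qed

lemma analytic_at_0_Sigma:
  fixes ip :: "'h::ab_group_add \<Rightarrow> 'h \<Rightarrow> int"
  assumes y: "y \<noteq> 0" and ip_sym: "\<And>a b. ip a b = ip b a"
    and SW_sym: "\<And>a. SW (K - a) = (-1) ^ N * SW a"
  shows "(\<lambda>x. Sigma ip K c1 SW x y) analytic_on {0}"
proof -
  have Zsum: "(\<lambda>x. Zsum x y) analytic_on {0}" and Zprod: "(\<lambda>x. Zprod x y) analytic_on {0}"
    unfolding Zsum_def Zprod_def using y by (auto intro!: analytic_intros analytic_at_0_Zfun)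
  have analytic: "(\<lambda>x. Sigma_sym ip K c1 SW (Zsum x y) (Zprod x y)) analytic_on {0}"
    unfolding Sigma_sym_def using Zprod_at_0 by (auto intro!: analytic_intros Zsum Zprod)
  have "eventually (\<lambda>x. Zprod x y \<noteq> 0) (nhds 0)"
    using analytic_at_neq_imp_eventually_neq[OF Zprod, of 0] Zprod_at_0
    by (simp add: eventually_nhds_conv_at)
  then have eq: "eventually (\<lambda>x. Sigma_sym ip K c1 SW (Zsum x y) (Zprod x y) = Sigma ip K c1 SW x y)
                    (nhds 0)"
    by (rule eventually_mono) (simp add: Sigma_eq_Sigma_sym[where ip = ip and SW = SW, OF ip_sym SW_sym])
  show ?thesis
    using analytic analytic_at_cong[OF eq refl] by simp
qed

lemma etabar_power: "etabar (x ^ m) = (\<Prod>n. 1 - x ^ (m * Suc n))"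
  by (simp only: etabar_def power_mult)

lemma analytic_at_0_psi:
  fixes ip :: "'h::ab_group_add \<Rightarrow> 'h \<Rightarrow> int"
  assumes y: "y \<noteq> 0" and ip_sym: "\<And>a b. ip a b = ip b a"
    and SW_sym: "\<And>a. SW (K - a) = (-1) ^ N * SW a"
  shows "(\<lambda>x. psi ip K c1 SW chi x y) analytic_on {0}"
proof -
  have P: "(\<lambda>x. \<Prod>n. (1 - x ^ (2 * Suc n)) ^ 10 * (1 - x ^ (2 * Suc n) * y)
             * (1 - x ^ (2 * Suc n) / y)) analytic_on {0}"
    by (rule analytic_at_0_prodinf_powers[where g = "\<lambda>w. (1 - w) ^ 10 * (1 - w * y) * (1 - w / y)"])
       (auto intro!: holomorphic_intros)
  have E: "(\<lambda>x. etabar (x ^ 6)) analytic_on {0}"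
    unfolding etabar_power
    by (rule analytic_at_0_prodinf_powers[where g = "\<lambda>w. 1 - w"]) (auto intro!: holomorphic_intros)
  show ?thesis
    unfolding psi_def
    by (intro analytic_intros P E analytic_at_0_theta01 analytic_at_0_Sigma[where ip = ip and SW = SW, OF y ip_sym SW_sym])
       (auto simp: y etabar_def theta01_at_0)
qed

lemma Zfun_minus: "Zfun (- x) y = Zfun x y"
  by (simp add: Zfun_def theta00_minus theta01_minus)

lemma Sigma_minus: "Sigma ip K c1 SW (- x) y = Sigma ip K c1 SW x y"
  by (simp add: Sigma_def Zplus_def Zminus_def Zsum_def Zprod_def Zfun_minus)

lemma psi_minus: "psi ip K c1 SW chi (- x) y = psi ip K c1 SW chi x y"
  by (simp add: psi_def Sigma_minus theta01_minus)

section \<open>Matching the q-expansion with the three twisted terms\<close>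

lemma twisted_point_power_even:
  assumes "2 * k = s + 3 * d"
  shows "(eps ^ k * exp (2 * pi * \<i> * \<tau> / 6)) ^ (2 * m)
       = exp (2 * pi * \<i> * of_nat m * ((\<tau> + of_nat s) / 3))"
proof -
  have "k * (2 * m) = s * m + 3 * (d * m)"
    using assms by (metis mult.assoc mult.commute add_mult_distrib)
  then have "eps ^ (k * (2 * m)) = eps ^ (s * m) * (eps ^ 3) ^ (d * m)"
    by (simp only: power_add power_mult)
  also have "\<dots> = eps ^ (s * m)"
    by (simp add: eps_cube)
  also have "\<dots> = exp (of_nat (s * m) * (2 * pi * \<i> / 3))"
    unfolding eps_def by (rule exp_of_nat_mult[symmetric])
  finally have "eps ^ (k * (2 * m)) = exp (of_nat (s * m) * (2 * pi * \<i> / 3))" .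
  moreover have "exp (2 * pi * \<i> * \<tau> / 6) ^ (2 * m) = exp (of_nat (2 * m) * (2 * pi * \<i> * \<tau> / 6))"
    by (rule exp_of_nat_mult[symmetric])
  ultimately have "(eps ^ k * exp (2 * pi * \<i> * \<tau> / 6)) ^ (2 * m)
      = exp (of_nat (s * m) * (2 * pi * \<i> / 3) + of_nat (2 * m) * (2 * pi * \<i> * \<tau> / 6))"
    by (simp add: power_mult_distrib power_mult exp_add)
  also have "\<dots> = exp (2 * pi * \<i> * of_nat m * ((\<tau> + of_nat s) / 3))"
    by (rule arg_cong[where f = exp]) (simp add: field_simps)
  finally show ?thesis .
qed

lemma twisted_point_power_6: "(eps ^ k * exp (2 * pi * \<i> * \<tau> / 6)) ^ 6 = exp (2 * pi * \<i> * \<tau>)"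
proof -
  have "eps ^ (k * 6) = (eps ^ 3) ^ (2 * k)"
    by (simp flip: power_mult add: mult.commute)
  then have "(eps ^ k * exp (2 * pi * \<i> * \<tau> / 6)) ^ 6 = exp (of_nat 6 * (2 * pi * \<i> * \<tau> / 6))"
    by (simp add: eps_cube power_mult_distrib flip: power_mult exp_of_nat_mult)
  then show ?thesis
    by (simp add: mult_ac)
qed

lemma psi_eq_rhs_term:
  fixes ip :: "'h::ab_group_add \<Rightarrow> 'h \<Rightarrow> int" and \<tau> z :: complex and k s d :: nat
  defines "Dz \<equiv> exp (pi * \<i> * z) - exp (- pi * \<i> * z)"
  assumes D: "Dz \<noteq> 0" and ks: "2 * k = s + 3 * d"
  shows "psi ip K c1 SW chi (eps ^ k * exp (2 * pi * \<i> * \<tau> / 6)) (exp (2 * pi * \<i> * z))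
       = 3 * (Dz * exp (pi * \<i> * ((\<tau> + of_nat s) / 3))) powi chi
           * (exp (pi * \<i> * \<tau> / 12) ^ 3) powi (- ip K K) * rhs_term ip K c1 SW chi 1 k s \<tau> z"
proof -
  define x where "x = eps ^ k * exp (2 * pi * \<i> * \<tau> / 6)"
  define y where "y = exp (2 * pi * \<i> * z)"
  define \<tau>' where "\<tau>' = (\<tau> + of_nat s) / 3"
  define e where "e = exp (pi * \<i> * \<tau>')"
  define c where "c = exp (pi * \<i> * \<tau> / 12)"
  define P where "P = (\<Prod>n. (1 - exp (2 * pi * \<i> * of_nat (Suc n) * \<tau>')) ^ 10
         * (1 - exp (2 * pi * \<i> * of_nat (Suc n) * \<tau>') * exp (2 * pi * \<i> * z))
         * (1 - exp (2 * pi * \<i> * of_nat (Suc n) * \<tau>') * exp (- 2 * pi * \<i> * z)))"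
  define E where "E = etabar (exp (2 * pi * \<i> * \<tau>))"
  have "w / y = w * exp (- 2 * pi * \<i> * z)" for w
    by (simp add: y_def exp_minus divide_inverse)
  then have P: "(\<Prod>n. (1 - x ^ (2 * Suc n)) ^ 10 * (1 - x ^ (2 * Suc n) * y) * (1 - x ^ (2 * Suc n) / y)) = P"
    unfolding P_def x_def \<tau>'_def twisted_point_power_even[OF ks] by (simp add: y_def)
  have E: "etabar (x ^ 6) = E"
    unfolding x_def twisted_point_power_6 E_def ..
  have Phi: "Phi \<tau>' z = Dz * e * P"
    unfolding Phi_def Dz_def e_def P_def ..
  have eta: "eta \<tau> = c * E"
    unfolding eta_def c_def E_def etabar_def ..
  have P_inverse: "1 / (3 * P) = Dz * e * (1 / (3 * Phi \<tau>' z))"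
    unfolding Phi using D by (simp add: e_def field_simps)
  have theta_quotient: "theta01 x y / (3 * E ^ 3) = c ^ 3 * (theta01 x y / (3 * eta \<tau> ^ 3))"
    unfolding eta by (simp add: c_def field_simps power_mult_distrib)
  have "psi ip K c1 SW chi x y = 9 * (Dz * e * (1 / (3 * Phi \<tau>' z))) powi chi
      * (c ^ 3 * (theta01 x y / (3 * eta \<tau> ^ 3))) powi (- ip K K) * Sigma ip K c1 SW x y"
    unfolding psi_def P E P_inverse theta_quotient ..
  also have "\<dots> = 3 * (Dz * e) powi chi * (c ^ 3) powi (- ip K K)
      * (3 * (1 / (3 * Phi \<tau>' z)) powi chi * (theta01 x y / (3 * eta \<tau> ^ 3)) powi (- ip K K)
         * Sigma ip K c1 SW x y)"
    by (simp only: power_int_mult_distrib) (simp add: mult_ac)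
  also have "3 * (1 / (3 * Phi \<tau>' z)) powi chi * (theta01 x y / (3 * eta \<tau> ^ 3)) powi (- ip K K)
         * Sigma ip K c1 SW x y = rhs_term ip K c1 SW chi 1 k s \<tau> z"
    by (simp add: rhs_term_def Let_def x_def y_def \<tau>'_def)
  finally show ?thesis
    by (simp add: x_def y_def e_def c_def \<tau>'_def)
qed

lemma rhs_prefactor:
  "qpow \<tau> (- real_of_int chi / 6 + real_of_int K2 / 8) * exp (pi * \<i> * ((\<tau> + of_nat s) / 3)) powi chi
     * (exp (pi * \<i> * \<tau> / 12) ^ 3) powi (- K2) = exp (of_int chi * pi * \<i> * of_nat s / 3)"
proof -
  have "qpow \<tau> (- real_of_int chi / 6 + real_of_int K2 / 8) * exp (pi * \<i> * ((\<tau> + of_nat s) / 3)) powi chi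
     * (exp (pi * \<i> * \<tau> / 12) ^ 3) powi (- K2)
      = exp (2 * pi * \<i> * \<tau> * of_real (- real_of_int chi / 6 + real_of_int K2 / 8)
             + of_int chi * (pi * \<i> * ((\<tau> + of_nat s) / 3))
             + of_int (- K2) * (of_nat 3 * (pi * \<i> * \<tau> / 12)))"
    unfolding qpow_def exp_power_int exp_add exp_of_nat_mult[symmetric] ..
  also have "\<dots> = exp (of_int chi * pi * \<i> * of_nat s / 3)"
    by (rule arg_cong[where f = exp]) (simp add: field_simps)
  finally show ?thesis .
qed

lemma scaled_psi_eq_rhs_term:
  fixes ip :: "'h::ab_group_add \<Rightarrow> 'h \<Rightarrow> int" and \<tau> z :: complex and k s d :: nat
  defines "Dz \<equiv> exp (pi * \<i> * z) - exp (- pi * \<i> * z)"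
  assumes D: "Dz \<noteq> 0" and ks: "2 * k = s + 3 * d"
  shows "qpow \<tau> (- real_of_int chi / 6 + real_of_int (ip K K) / 8)
           * psi ip K c1 SW chi (eps ^ k * exp (2 * pi * \<i> * \<tau> / 6)) (exp (2 * pi * \<i> * z))
           / (3 * Dz powi chi)
       = rhs_term ip K c1 SW chi (exp (of_int chi * pi * \<i> * of_nat s / 3)) k s \<tau> z"
proof -
  define Q where "Q = qpow \<tau> (- real_of_int chi / 6 + real_of_int (ip K K) / 8)"
  define e where "e = exp (pi * \<i> * ((\<tau> + of_nat s) / 3))"
  define c where "c = exp (pi * \<i> * \<tau> / 12)"
  have "Q * psi ip K c1 SW chi (eps ^ k * exp (2 * pi * \<i> * \<tau> / 6)) (exp (2 * pi * \<i> * z))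
          / (3 * Dz powi chi)
      = Q * (3 * (Dz * e) powi chi * (c ^ 3) powi (- ip K K) * rhs_term ip K c1 SW chi 1 k s \<tau> z)
          / (3 * Dz powi chi)"
    unfolding psi_eq_rhs_term[OF D[unfolded Dz_def] ks, folded Dz_def] e_def c_def ..
  also have "\<dots> = Q * e powi chi * (c ^ 3) powi (- ip K K) * rhs_term ip K c1 SW chi 1 k s \<tau> z"
    using D by (simp add: power_int_mult_distrib field_simps)
  also have "\<dots> = exp (of_int chi * pi * \<i> * of_nat s / 3) * rhs_term ip K c1 SW chi 1 k s \<tau> z"
    unfolding Q_def e_def c_def rhs_prefactor ..
  also have "\<dots> = rhs_term ip K c1 SW chi (exp (of_int chi * pi * \<i> * of_nat s / 3)) k s \<tau> z"
    by (simp add: rhs_term_def Let_def)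
  finally show ?thesis
    by (simp add: Q_def)
qed

lemma rhs_term_scale:
  "rhs_term ip K c1 SW chi (a * b) k s \<tau> z = a * rhs_term ip K c1 SW chi b k s \<tau> z"
  by (simp add: rhs_term_def Let_def)

lemma coefficient_second_term:
  "eps powi (int 1 * (2 * c + 8 * chi)) * exp (of_int chi * pi * \<i> * of_nat 2 / 3) = eps powi (2 * c)"
proof -
  have "exp (of_int chi * pi * \<i> * of_nat 2 / 3) = eps powi chi"
    by (simp add: eps_def exp_power_int field_simps)
  then show ?thesis
    using eps_nonzero by (simp flip: power_int_add) (rule eps_power_int_cong, presburger)
qed

lemma coefficient_third_term:
  "eps powi (int 2 * (2 * c + 8 * chi)) * exp (of_int chi * pi * \<i> * of_nat 1 / 3)
     = (-1) powi chi * eps powi c"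
proof -
  have "exp (of_int chi * pi * \<i> * of_nat 1 / 3)
      = exp (of_int chi * (pi * \<i>)) * exp (of_int (2 * chi) * (2 * pi * \<i> / 3))"
    unfolding exp_add[symmetric] by (rule exp_eq[THEN iffD2], rule exI[of _ "- chi"]) (simp add: field_simps)
  also have "\<dots> = (-1) powi chi * eps powi (2 * chi)"
    using exp_power_int[of "pi * \<i>" chi] by (simp add: eps_def exp_power_int)
  finally have "eps powi (int 2 * (2 * c + 8 * chi)) * exp (of_int chi * pi * \<i> * of_nat 1 / 3)
      = (-1) powi chi * eps powi (4 * c + 18 * chi)"
    using eps_nonzero by (simp add: algebra_simps flip: power_int_add)
  also have "eps powi (4 * c + 18 * chi) = eps powi c"
    by (rule eps_power_int_cong) presburger
  finally show ?thesis .
qed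

lemma Zinst_term_eq_taylor_coeff:
  fixes ip :: "'h::ab_group_add \<Rightarrow> 'h \<Rightarrow> int"
  assumes hyp: "\<And>c2. chivir c2 (exp (2 * pi * \<i> * z))
                 = psi_coeff ip K c SW chi (vdim (ip c c) chi c2) (exp (2 * pi * \<i> * z))"
  shows "Zinst_term (ip c c) chi chivir \<tau> z c2
       = (if 0 \<le> 6 * c2 + (- 2 * ip c c - 8 * chi)
          then (deriv ^^ nat (6 * c2 + (- 2 * ip c c - 8 * chi)))
                 (\<lambda>x. psi ip K c SW chi x (exp (2 * pi * \<i> * z))) 0
               / fact (nat (6 * c2 + (- 2 * ip c c - 8 * chi)))
               * exp (2 * pi * \<i> * \<tau> / 6) ^ nat (6 * c2 + (- 2 * ip c c - 8 * chi))
          else 0)"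
proof -
  define v where "v = vdim (ip c c) chi c2"
  have v: "v = 6 * c2 + (- 2 * ip c c - 8 * chi)"
    by (simp add: v_def vdim_def)
  have "qpow \<tau> (real_of_int v / 6) = exp (2 * pi * \<i> * \<tau> / 6) ^ nat v" if "0 \<le> v"
  proof -
    have "2 * pi * \<i> * \<tau> * of_real (real_of_int v / 6) = of_nat (nat v) * (2 * pi * \<i> * \<tau> / 6)"
      using that by (simp add: field_simps)
    then show ?thesis
      by (simp only: qpow_def exp_of_nat_mult)
  qed
  then show ?thesis
    unfolding Zinst_term_def hyp v_def[symmetric] unfolding v
    by (simp add: psi_coeff_def)
qed

lemma has_sum_Zinst_term:
  fixes ip :: "'h::ab_group_add \<Rightarrow> 'h \<Rightarrow> int" and K c1 :: 'h and SW :: "'h \<Rightarrow> int"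
    and chi :: int and \<tau> z :: complex
  defines "f \<equiv> \<lambda>x. psi ip K c1 SW chi x (exp (2 * pi * \<i> * z))"
    and "x \<equiv> exp (2 * pi * \<i> * \<tau> / 6)"
  assumes hyp: "\<And>c2. chivir c2 (exp (2 * pi * \<i> * z))
                 = psi_coeff ip K c1 SW chi (vdim (ip c1 c1) chi c2) (exp (2 * pi * \<i> * z))"
    and holo: "f holomorphic_on ball 0 R" and x: "norm x < R"
  shows "(Zinst_term (ip c1 c1) chi chivir \<tau> z
           has_sum (\<Sum>k<3. eps powi (int k * (2 * ip c1 c1 + 8 * chi)) * f (eps ^ k * x)) / 3) UNIV"
proof -
  define C where "C = - 2 * ip c1 c1 - 8 * chi"
  have "- (int k * C) = int k * (2 * ip c1 c1 + 8 * chi)" for k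
    by (simp add: C_def algebra_simps)
  moreover have "((\<lambda>n. (deriv ^^ n) f 0 / fact n * x ^ n)
      has_sum (\<Sum>k<3. eps powi (- (int k * C)) * f (eps ^ k * x)) / 3) {n. 6 dvd int n - C}"
    using holo x by (intro has_sum_even_taylor_series_mod_6) (auto simp: f_def psi_minus C_def)
  ultimately have "((\<lambda>c2. if 0 \<le> 6 * c2 + C
                   then (deriv ^^ nat (6 * c2 + C)) f 0 / fact (nat (6 * c2 + C)) * x ^ nat (6 * c2 + C)
                   else 0)
      has_sum (\<Sum>k<3. eps powi (int k * (2 * ip c1 c1 + 8 * chi)) * f (eps ^ k * x)) / 3) UNIV"
    by (intro has_sum_arith_progression) simp_all
  also have "(\<lambda>c2. if 0 \<le> 6 * c2 + C
                   then (deriv ^^ nat (6 * c2 + C)) f 0 / fact (nat (6 * c2 + C)) * x ^ nat (6 * c2 + C)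
                   else 0) = Zinst_term (ip c1 c1) chi chivir \<tau> z"
    using Zinst_term_eq_taylor_coeff[where ip = ip and K = K and c = c1 and SW = SW and chi = chi
        and chivir = chivir and z = z, OF hyp]
    by (intro ext) (simp only: C_def f_def x_def)
  finally show ?thesis .
qed

lemma Zinst_eq_rhs:
  fixes ip :: "'h::ab_group_add \<Rightarrow> 'h \<Rightarrow> int" and K c1 :: 'h and SW :: "'h \<Rightarrow> int"
    and chi :: int and \<tau> z :: complex
  defines "Dz \<equiv> exp (pi * \<i> * z) - exp (- pi * \<i> * z)"
    and "f \<equiv> \<lambda>x. psi ip K c1 SW chi x (exp (2 * pi * \<i> * z))"
  assumes hyp: "\<And>c2. chivir c2 (exp (2 * pi * \<i> * z))
                 = psi_coeff ip K c1 SW chi (vdim (ip c1 c1) chi c2) (exp (2 * pi * \<i> * z))"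
    and D: "Dz \<noteq> 0" and holo: "f holomorphic_on ball 0 R"
    and x: "norm (exp (2 * pi * \<i> * \<tau> / 6)) < R"
  shows "Zinst_term (ip c1 c1) chi chivir \<tau> z summable_on UNIV \<and>
           Zinst (ip K K) (ip c1 c1) chi chivir \<tau> z / Dz powi chi
           = rhs_term ip K c1 SW chi 1 0 0 \<tau> z
             + rhs_term ip K c1 SW chi (eps powi (2 * ip c1 c1)) 1 2 \<tau> z
             + rhs_term ip K c1 SW chi ((-1) powi chi * eps powi (ip c1 c1)) 2 1 \<tau> z"
    (is "_ \<and> _ = ?rhs")
proof
  define x where "x = exp (2 * pi * \<i> * \<tau> / 6)"
  define Q where "Q = qpow \<tau> (- real_of_int chi / 6 + real_of_int (ip K K) / 8)"
  define e where "e k = eps powi (int k * (2 * ip c1 c1 + 8 * chi))" for k :: nat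
  have terms: "(Zinst_term (ip c1 c1) chi chivir \<tau> z has_sum (\<Sum>k<3. e k * f (eps ^ k * x)) / 3) UNIV"
    unfolding e_def f_def x_def
    by (rule has_sum_Zinst_term[where ip = ip and K = K and SW = SW and chi = chi and chivir = chivir
        and z = z, OF hyp holo[unfolded f_def] x])
  then show "Zinst_term (ip c1 c1) chi chivir \<tau> z summable_on UNIV"
    by (rule has_sum_imp_summable)
  have summand: "Q * f (eps ^ k * x) / (3 * Dz powi chi)
      = rhs_term ip K c1 SW chi (exp (of_int chi * pi * \<i> * of_nat s / 3)) k s \<tau> z"
    if "2 * k = s + 3 * d" for k s d
    using scaled_psi_eq_rhs_term[OF D[unfolded Dz_def] that] by (simp only: Q_def f_def x_def Dz_def)
  have sum3: "(\<Sum>k<3. g k) = g 0 + g 1 + g 2" for g :: "nat \<Rightarrow> complex"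
    by (simp add: eval_nat_numeral)
  have arith: "2 * 0 = 0 + 3 * (0::nat)" "2 * 1 = 2 + 3 * (0::nat)" "2 * 2 = 1 + 3 * (1::nat)"
    by simp_all
  have "Zinst (ip K K) (ip c1 c1) chi chivir \<tau> z / Dz powi chi
      = (\<Sum>k<3. e k * (Q * f (eps ^ k * x) / (3 * Dz powi chi)))"
    unfolding Zinst_def infsumI[OF terms] Q_def[symmetric]
    by (simp add: sum_divide_distrib sum_distrib_left field_simps)
  also have "\<dots> = e 0 * rhs_term ip K c1 SW chi (exp (of_int chi * pi * \<i> * of_nat 0 / 3)) 0 (of_nat 0) \<tau> z
      + e 1 * rhs_term ip K c1 SW chi (exp (of_int chi * pi * \<i> * of_nat 2 / 3)) 1 (of_nat 2) \<tau> z
      + e 2 * rhs_term ip K c1 SW chi (exp (of_int chi * pi * \<i> * of_nat 1 / 3)) 2 (of_nat 1) \<tau> z"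
    by (simp only: sum3 summand[OF arith(1)] summand[OF arith(2)] summand[OF arith(3)])
  also have "\<dots> = ?rhs"
    unfolding e_def
    by (simp only: rhs_term_scale[symmetric] coefficient_second_term coefficient_third_term) simp
  finally show "Zinst (ip K K) (ip c1 c1) chi chivir \<tau> z / Dz powi chi = ?rhs" .
qed

lemma exp_pi_i_diff_nonzero:
  assumes "z \<notin> \<int>"
  shows "exp (pi * \<i> * z) - exp (- pi * \<i> * z) \<noteq> 0"
proof
  assume "exp (pi * \<i> * z) - exp (- pi * \<i> * z) = 0"
  then obtain n :: int where "pi * \<i> * z = - pi * \<i> * z + of_int (2 * n) * pi * \<i>"
    unfolding exp_eq right_minus_eq by blast
  then have "z = of_int n"
    by (simp add: algebra_simps)
  with assms show False
    by (simp add: Ints_of_int)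
qed

lemma norm_exp_tau_sixth_less:
  fixes \<tau> :: complex
  assumes R: "R > 0" and Im: "Im \<tau> > - 3 * ln R / pi"
  shows "norm (exp (2 * pi * \<i> * \<tau> / 6)) < R"
proof -
  have "norm (exp (2 * pi * \<i> * \<tau> / 6)) = exp (- (pi * Im \<tau> / 3))"
    by (simp add: norm_exp_eq_Re)
  also have "\<dots> < exp (ln R)"
    using Im by (simp add: field_simps)
  finally show ?thesis
    using R by simp
qed

theorem corollary1p2:
  fixes ip :: "'h::ab_group_add \<Rightarrow> 'h \<Rightarrow> int"
    and K c1 :: 'h
    and SW :: "'h \<Rightarrow> int"
    and pg :: nat
    and chi :: int
    and chivir :: "int \<Rightarrow> complex \<Rightarrow> complex"
  assumes ip_sym: "\<And>a b. ip a b = ip b a"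
    and ip_add: "\<And>a b c. ip (a + b) c = ip a c + ip b c"
    and pg_pos: "pg > 0"
    and chi_def: "chi = 1 + int pg"
    and SW_finite: "finite {a. SW a \<noteq> 0}"
    and SW_sym: "\<And>a. SW (K - a) = (-1) ^ nat chi * SW a"
    and hyp: "\<And>c2 y. y \<noteq> 0 \<Longrightarrow>
                chivir c2 y = psi_coeff ip K c1 SW chi (vdim (ip c1 c1) chi c2) y"
  shows "\<forall>z. z \<notin> \<int> \<longrightarrow> (\<exists>T. \<forall>\<tau>. Im \<tau> > T \<longrightarrow>
           Zinst_term (ip c1 c1) chi chivir \<tau> z summable_on UNIV \<and>
           Zinst (ip K K) (ip c1 c1) chi chivir \<tau> z
             / (exp (pi * \<i> * z) - exp (- pi * \<i> * z)) powi chi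
           = rhs_term ip K c1 SW chi 1 0 0 \<tau> z
             + rhs_term ip K c1 SW chi (eps powi (2 * ip c1 c1)) 1 2 \<tau> z
             + rhs_term ip K c1 SW chi ((-1) powi chi * eps powi (ip c1 c1)) 2 1 \<tau> z)"
  apply (intro allI impI)
  subgoal for z
  proof -
    assume "z \<notin> \<int>"
    obtain R where "R > 0"
      and holo: "(\<lambda>x. psi ip K c1 SW chi x (exp (2 * pi * \<i> * z))) holomorphic_on ball 0 R"
      using analytic_at_0_psi[where ip = ip and SW = SW, OF _ ip_sym SW_sym] analytic_at_ball
      by (metis exp_not_eq_zero)
    show ?thesis
      by (intro exI[of _ "- 3 * ln R / pi"] allI impI
          Zinst_eq_rhs[where ip = ip and K = K and SW = SW and chi = chi and chivir = chivir and z = z,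
            OF hyp[OF exp_not_eq_zero] exp_pi_i_diff_nonzero[OF \<open>z \<notin> \<int>\<close>] holo]
          norm_exp_tau_sixth_less[OF \<open>R > 0\<close>]) simp_all
  qed
  done

end
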